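(* Let $k$ be an algebraically closed field of characteristic zero, $n\ge1$, $q\in k$ a primitive $2n$-th root of unity, $a\in k\setminus\{0\}$. Let $\mathfrak wH_{4n}$ be the weak Hopf algebra generated by $Z,X$ with $Z^{2n+1}=Z$, $ZX=qXZ$, $X^2=0$, $\Delta(Z)=Z\otimes Z+a(1-q^{-2})Z^{n+1}X\otimes ZX$, $\Delta(X)=X\otimes 1+Z^n\otimes X$, $\epsilon(Z)=1$, $\epsilon(X)=0$, $T(Z)=Z^{2n-1}$, $T(X)=-Z^nX$. Let $H_{4n}$ be the Hopf algebra generated by $z,x$ with $z^{2n}=1$, $zx=qxz$, $x^2=0$, $\Delta(z)=z\otimes z+a(1-q^{-2})z^{n+1}x\otimes zx$, $\Delta(x)=x\otimes 1+z^n\otimes x$, $\epsilon(z)=1$, $\epsilon(x)=0$, $S(z)=z^{-1}$, $S(x)=-z^nx$. Let $J=Z^{2n}$, $\mathfrak w_1=\mathfrak wH_{4n}J$ and $\mathfrak w_2=\mathfrak wH_{4n}(1-J)$. Then $\mathfrak wH_{4n}=\mathfrak w_1\oplus\mathfrak w_2$ as a direct sum of two-sided ideals; moreover $\mathfrak w_1$ (with unit $J$, and with the comultiplication and counit restricted from $\mathfrak wH_{4n}$ and antipode $Z\mapsto Z^{2n-1}$, $XJ\mapsto -Z^nXJ$) is isomorphic to $H_{4n}$ as Hopf algebras, and $\mathfrak w_2\cong k[y]/(y^2)$ as algebras. *)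

theory Defs
  imports "HOL-Computational_Algebra.Polynomial"
begin

text \<open>An element of the free k-algebra on the two generators True (Z resp. z) and
False (X resp. x) is a finitely supported function from words to k.
Quotient algebras are handled via representatives modulo a two-sided ideal.\<close>

type_synonym 'k fa = "bool list \<Rightarrow> 'k"
type_synonym 'k fa2 = "bool list \<times> bool list \<Rightarrow> 'k"

definition fsupp :: "('a \<Rightarrow> 'k::zero) \<Rightarrow> bool" where
  "fsupp f \<longleftrightarrow> finite {w. f w \<noteq> 0}"

definition FA :: "'k::zero fa set" where
  "FA = {f. fsupp f}"

definition fa_zero :: "'k::zero fa" where "fa_zero = (\<lambda>_. 0)"
definition fa_add :: "'k::plus fa \<Rightarrow> 'k fa \<Rightarrow> 'k fa" where
  "fa_add f g = (\<lambda>w. f w + g w)"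
definition fa_diff :: "'k::minus fa \<Rightarrow> 'k fa \<Rightarrow> 'k fa" where
  "fa_diff f g = (\<lambda>w. f w - g w)"
definition fa_smult :: "'k::times \<Rightarrow> 'k fa \<Rightarrow> 'k fa" where
  "fa_smult c f = (\<lambda>w. c * f w)"
definition fa_word :: "bool list \<Rightarrow> 'k::{zero,one} fa" where
  "fa_word u = (\<lambda>w. if w = u then 1 else 0)"
definition fa_one :: "'k::{zero,one} fa" where
  "fa_one = fa_word []"
definition fa_mult :: "'k::comm_ring_1 fa \<Rightarrow> 'k fa \<Rightarrow> 'k fa" where
  "fa_mult f g = (\<lambda>w. \<Sum>i\<le>length w. f (take i w) * g (drop i w))"
definition fa_pow :: "'k::comm_ring_1 fa \<Rightarrow> nat \<Rightarrow> 'k fa" where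
  "fa_pow f m = ((fa_mult f) ^^ m) fa_one"

inductive_set fa_ideal :: "'k::comm_ring_1 fa set \<Rightarrow> 'k fa set" for R where
  zero: "fa_zero \<in> fa_ideal R"
| gen: "r \<in> R \<Longrightarrow> u \<in> FA \<Longrightarrow> v \<in> FA \<Longrightarrow> fa_mult (fa_mult u r) v \<in> fa_ideal R"
| add: "f \<in> fa_ideal R \<Longrightarrow> g \<in> fa_ideal R \<Longrightarrow> fa_add f g \<in> fa_ideal R"

definition fa2_zero :: "'k::zero fa2" where "fa2_zero = (\<lambda>_. 0)"
definition fa2_add :: "'k::plus fa2 \<Rightarrow> 'k fa2 \<Rightarrow> 'k fa2" where
  "fa2_add s t = (\<lambda>p. s p + t p)"
definition fa2_diff :: "'k::minus fa2 \<Rightarrow> 'k fa2 \<Rightarrow> 'k fa2" where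
  "fa2_diff s t = (\<lambda>p. s p - t p)"
definition fa2_smult :: "'k::times \<Rightarrow> 'k fa2 \<Rightarrow> 'k fa2" where
  "fa2_smult c s = (\<lambda>p. c * s p)"
definition fa2_one :: "'k::{zero,one} fa2" where
  "fa2_one = (\<lambda>p. if p = ([], []) then 1 else 0)"
definition fa2_mult :: "'k::comm_ring_1 fa2 \<Rightarrow> 'k fa2 \<Rightarrow> 'k fa2" where
  "fa2_mult s t = (\<lambda>(u, v). \<Sum>i\<le>length u. \<Sum>j\<le>length v.
      s (take i u, take j v) * t (drop i u, drop j v))"

definition ftens :: "'k::times fa \<Rightarrow> 'k fa \<Rightarrow> 'k fa2" where
  "ftens f g = (\<lambda>(u, v). f u * g v)"

text \<open>The subspace I \<otimes> F + F \<otimes> I of F \<otimes> F; (F/I) \<otimes> (F/I) = (F \<otimes> F)/(I \<otimes> F + F \<otimes> I).\<close>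
inductive_set tens_ideal :: "'k::comm_ring_1 fa set \<Rightarrow> 'k fa2 set" for I where
  zero: "fa2_zero \<in> tens_ideal I"
| left: "r \<in> I \<Longrightarrow> g \<in> FA \<Longrightarrow> ftens r g \<in> tens_ideal I"
| right: "r \<in> I \<Longrightarrow> g \<in> FA \<Longrightarrow> ftens g r \<in> tens_ideal I"
| add: "s \<in> tens_ideal I \<Longrightarrow> t \<in> tens_ideal I \<Longrightarrow> fa2_add s t \<in> tens_ideal I"

definition lin_ext :: "(bool list \<Rightarrow> 'b \<Rightarrow> 'k::comm_ring_1) \<Rightarrow> 'k fa \<Rightarrow> ('b \<Rightarrow> 'k)" where
  "lin_ext \<phi> f = (\<lambda>b. \<Sum>w\<in>{w. f w \<noteq> 0}. f w * \<phi> w b)"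

definition lin_ext_k :: "(bool list \<Rightarrow> 'k::comm_ring_1) \<Rightarrow> 'k fa \<Rightarrow> 'k" where
  "lin_ext_k e f = (\<Sum>w\<in>{w. f w \<noteq> 0}. f w * e w)"

definition lin_ext_poly :: "(bool list \<Rightarrow> 'k::comm_ring_1 poly) \<Rightarrow> 'k fa \<Rightarrow> 'k poly" where
  "lin_ext_poly \<chi> f = (\<Sum>w\<in>{w. f w \<noteq> 0}. smult (f w) (\<chi> w))"

definition hom_word :: "('b \<Rightarrow> 'b \<Rightarrow> 'b) \<Rightarrow> 'b \<Rightarrow> (bool \<Rightarrow> 'b) \<Rightarrow> bool list \<Rightarrow> 'b" where
  "hom_word mul one h w = foldr (\<lambda>c acc. mul (h c) acc) w one"

definition tens_map :: "(bool list \<Rightarrow> 'k::comm_ring_1 fa) \<Rightarrow> 'k fa2 \<Rightarrow> 'k fa2" where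
  "tens_map \<psi> t = (\<lambda>p. \<Sum>uv\<in>{uv. t uv \<noteq> 0}. t uv * ftens (\<psi> (fst uv)) (\<psi> (snd uv)) p)"

definition Zg :: "'k::{zero,one} fa" where "Zg = fa_word [True]"
definition Xg :: "'k::{zero,one} fa" where "Xg = fa_word [False]"

definition wH_rels :: "nat \<Rightarrow> 'k::comm_ring_1 \<Rightarrow> 'k fa set" where
  "wH_rels n q = {fa_diff (fa_pow Zg (2*n+1)) Zg,
                  fa_diff (fa_mult Zg Xg) (fa_smult q (fa_mult Xg Zg)),
                  fa_mult Xg Xg}"

definition H_rels :: "nat \<Rightarrow> 'k::comm_ring_1 \<Rightarrow> 'k fa set" where
  "H_rels n q = {fa_diff (fa_pow Zg (2*n)) fa_one,
                 fa_diff (fa_mult Zg Xg) (fa_smult q (fa_mult Xg Zg)),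
                 fa_mult Xg Xg}"

text \<open>Comultiplication on generators (same formulas for both algebras):
  Delta(Z) = Z\<otimes>Z + a(1-q^{-2}) Z^{n+1}X \<otimes> ZX,  Delta(X) = X \<otimes> 1 + Z^n \<otimes> X.\<close>
definition comult_gen :: "nat \<Rightarrow> 'k::field \<Rightarrow> 'k \<Rightarrow> bool \<Rightarrow> 'k fa2" where
  "comult_gen n q a c =
     (if c then fa2_add (ftens Zg Zg)
                  (fa2_smult (a * (1 - inverse (q^2)))
                     (ftens (fa_mult (fa_pow Zg (n+1)) Xg) (fa_mult Zg Xg)))
      else fa2_add (ftens Xg fa_one) (ftens (fa_pow Zg n) Xg))"

definition comult :: "nat \<Rightarrow> 'k::field \<Rightarrow> 'k \<Rightarrow> 'k fa \<Rightarrow> 'k fa2" where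
  "comult n q a = lin_ext (hom_word fa2_mult fa2_one (comult_gen n q a))"

definition counit :: "'k::comm_ring_1 fa \<Rightarrow> 'k" where
  "counit = lin_ext_k (hom_word (*) 1 (\<lambda>c. if c then 1 else 0))"

text \<open>Antipode of H_{4n}: S(z) = z^{-1} = z^{2n-1}, S(x) = -z^n x, extended as an
  anti-algebra map (words are reversed).\<close>
definition antipode_H :: "nat \<Rightarrow> 'k::comm_ring_1 fa \<Rightarrow> 'k fa" where
  "antipode_H n = lin_ext (\<lambda>w. hom_word fa_mult fa_one
      (\<lambda>c. if c then fa_pow Zg (2*n-1) else fa_smult (-1) (fa_mult (fa_pow Zg n) Xg)) (rev w))"

definition Jg :: "nat \<Rightarrow> 'k::comm_ring_1 fa" where
  "Jg n = fa_pow Zg (2*n)"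

text \<open>Antipode of w_1 (unit J): anti-algebra map with Z \<mapsto> Z^{2n-1}, X \<mapsto> -Z^n X J
  (so XJ \<mapsto> -Z^n X J), unit \<mapsto> J.\<close>
definition antipode_w1 :: "nat \<Rightarrow> 'k::comm_ring_1 fa \<Rightarrow> 'k fa" where
  "antipode_w1 n = lin_ext (\<lambda>w. hom_word fa_mult (Jg n)
      (\<lambda>c. if c then fa_pow Zg (2*n-1)
           else fa_smult (-1) (fa_mult (fa_mult (fa_pow Zg n) Xg) (Jg n))) (rev w))"

text \<open>Principal ideals w_1 = wH J and w_2 = wH (1 - J), as sets of representatives
  (saturated modulo the ideal I).\<close>
definition w_part :: "'k::comm_ring_1 fa set \<Rightarrow> 'k fa \<Rightarrow> 'k fa set" where
  "w_part I e = {f \<in> FA. \<exists>g\<in>FA. fa_diff f (fa_mult g e) \<in> I}"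

definition sum_tens :: "('k::comm_ring_1 fa \<times> 'k fa) list \<Rightarrow> 'k fa2" where
  "sum_tens ps = foldr fa2_add (map (\<lambda>(g, h). ftens g h) ps) fa2_zero"

definition primitive_root :: "'k::comm_ring_1 \<Rightarrow> nat \<Rightarrow> bool" where
  "primitive_root q m \<longleftrightarrow> q ^ m = 1 \<and> (\<forall>j. 0 < j \<and> j < m \<longrightarrow> q ^ j \<noteq> 1)"

definition alg_closed :: "'k::field itself \<Rightarrow> bool" where
  "alg_closed _ \<longleftrightarrow> (\<forall>p::'k poly. degree p \<noteq> 0 \<longrightarrow> (\<exists>x. poly p x = 0))"

end

theory Submission
  imports Defs
begin

text \<open>
  Modulo the relations, \<open>Z\<^sup>2\<^sup>n\<close> commutes with \<open>Z\<close>, and with \<open>X\<close> because \<open>q\<^sup>2\<^sup>n = 1\<close>, while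
  \<open>Z\<^sup>2\<^sup>n\<^sup>+\<^sup>1 = Z\<close> shows that every word containing \<open>Z\<close> is fixed by multiplication with
  \<open>J = Z\<^sup>2\<^sup>n\<close>. Hence \<open>J\<close> is a central idempotent and \<open>wH = wH J \<oplus> wH (1 - J)\<close>.

  Imposing \<open>J = 1\<close> turns the relations of \<open>wH\<close> into those of \<open>H\<^sub>4\<^sub>n\<close>, and conversely
  \<open>I\<^sub>H J \<subseteq> I\<close>; so the identity on representatives induces an isomorphism \<open>wH J \<cong> H\<^sub>4\<^sub>n\<close>.
  It respects comultiplication, counit and antipode, since these are given by the same formulas
  on the generators, up to factors \<open>J\<close> that become \<open>1\<close> in \<open>H\<^sub>4\<^sub>n\<close>.

  In \<open>wH (1 - J)\<close> every word containing \<open>Z\<close> vanishes, leaving \<open>1\<close> and \<open>X\<close> with \<open>X\<^sup>2 = 0\<close>;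
  the character \<open>Z \<mapsto> 0, X \<mapsto> y\<close> identifies it with \<open>k[y]/(y\<^sup>2)\<close>. The same character
  vanishes modulo \<open>y\<^sup>2\<close> on \<open>wH J\<close>, so the \<open>Z\<close>-free words of an element of \<open>wH J\<close> are
  \<open>X\<^sup>k\<close> with \<open>k \<ge> 2\<close>. Their coproducts lie in the tensor ideal because \<open>\<Delta>(X)\<^sup>2 = 0\<close>, which
  comes down to \<open>Z\<^sup>n X + X Z\<^sup>n = 0\<close> (as \<open>q\<^sup>n = -1\<close>). Every other word contains \<open>Z\<close>, and
  each term of \<open>\<Delta>(Z)\<close> has a \<open>Z\<close> in both tensor factors, so \<open>\<Delta>\<close> maps these words into
  \<open>wH J \<otimes> wH J\<close>.
\<close>

section \<open>The free algebra\<close>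

abbreviation supp :: "('a \<Rightarrow> 'k::zero) \<Rightarrow> 'a set" where
  "supp f \<equiv> {w. f w \<noteq> 0}"

lemma FA_iff: "f \<in> FA \<longleftrightarrow> finite (supp f)"
  by (simp add: FA_def fsupp_def)

lemma FA_zero [simp]: "fa_zero \<in> FA"
  by (simp add: FA_iff fa_zero_def)

lemma FA_word [simp]: "fa_word u \<in> FA"
  by (auto simp: FA_iff fa_word_def intro: finite_subset[of _ "{u}"])

lemma FA_one [simp]: "fa_one \<in> FA"
  by (simp add: fa_one_def)

lemma FA_add [simp]: "f \<in> FA \<Longrightarrow> g \<in> FA \<Longrightarrow> fa_add f (g :: 'k::comm_ring_1 fa) \<in> FA"
  unfolding FA_iff fa_add_def by (rule finite_subset[of _ "supp f \<union> supp g"]) auto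

lemma FA_diff [simp]: "f \<in> FA \<Longrightarrow> g \<in> FA \<Longrightarrow> fa_diff f (g :: 'k::comm_ring_1 fa) \<in> FA"
  unfolding FA_iff fa_diff_def by (rule finite_subset[of _ "supp f \<union> supp g"]) auto

lemma FA_smult [simp]: "f \<in> FA \<Longrightarrow> fa_smult c (f :: 'k::comm_ring_1 fa) \<in> FA"
  unfolding FA_iff fa_smult_def by (rule finite_subset[of _ "supp f"]) auto

lemma fa_mult_nonzero_split:
  fixes f g :: "'k::comm_ring_1 fa"
  assumes "fa_mult f g w \<noteq> 0"
  shows "\<exists>i\<le>length w. f (take i w) \<noteq> 0 \<and> g (drop i w) \<noteq> 0"
proof (rule ccontr)
  assume "\<not> ?thesis"
  hence "fa_mult f g w = 0" unfolding fa_mult_def by (intro sum.neutral) auto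
  thus False using assms by simp
qed

lemma FA_mult [simp]:
  fixes f g :: "'k::comm_ring_1 fa"
  assumes "f \<in> FA" "g \<in> FA"
  shows "fa_mult f g \<in> FA"
proof -
  have "supp (fa_mult f g) \<subseteq> (\<lambda>(u, v). u @ v) ` (supp f \<times> supp g)"
  proof
    fix w assume "w \<in> supp (fa_mult f g)"
    then obtain i where "f (take i w) \<noteq> 0" "g (drop i w) \<noteq> 0"
      using fa_mult_nonzero_split by blast
    thus "w \<in> (\<lambda>(u, v). u @ v) ` (supp f \<times> supp g)"
      by (intro image_eqI[of _ _ "(take i w, drop i w)"]) auto
  qed
  thus ?thesis using assms unfolding FA_iff by (meson finite_SigmaI finite_imageI finite_subset)
qed

lemma fa_mult_add_left: "fa_mult (fa_add f g) h = fa_add (fa_mult f h) (fa_mult g h)"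
  by (simp add: fa_mult_def fa_add_def distrib_right sum.distrib)

lemma fa_mult_add_right: "fa_mult h (fa_add f g) = fa_add (fa_mult h f) (fa_mult h g)"
  by (simp add: fa_mult_def fa_add_def distrib_left sum.distrib)

lemma fa_mult_diff_left: "fa_mult (fa_diff f g) h = fa_diff (fa_mult f h) (fa_mult g h)"
  by (simp add: fa_mult_def fa_diff_def left_diff_distrib sum_subtractf)

lemma fa_mult_diff_right: "fa_mult h (fa_diff f g) = fa_diff (fa_mult h f) (fa_mult h g)"
  by (simp add: fa_mult_def fa_diff_def right_diff_distrib sum_subtractf)

lemma fa_mult_smult_left: "fa_mult (fa_smult c f) h = fa_smult c (fa_mult f h)"
  by (simp add: fa_mult_def fa_smult_def sum_distrib_left mult.assoc)

lemma fa_mult_smult_right: "fa_mult h (fa_smult c f) = fa_smult c (fa_mult h f)"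
  by (simp add: fa_mult_def fa_smult_def sum_distrib_left mult.left_commute)

lemma fa_mult_zero [simp]: "fa_mult fa_zero h = fa_zero" "fa_mult h fa_zero = fa_zero"
  by (simp_all add: fa_mult_def fa_zero_def)

lemma fa_mult_word_term:
  assumes "i \<le> length w"
  shows "(if take i w = u then 1 else 0) * (if drop i w = v then 1 else 0) =
         (if i = length u then (if w = u @ v then 1 else 0) else (0::'k::comm_ring_1))"
proof (cases "take i w = u \<and> drop i w = v")
  case True
  hence "w = u @ v" by (metis append_take_drop_id)
  moreover have "i = length u" using True assms by auto
  ultimately show ?thesis using True by simp
next
  case False
  hence "\<not> (i = length u \<and> w = u @ v)" by auto
  thus ?thesis using False by auto
qed

lemma fa_mult_word [simp]:
  "fa_mult (fa_word u) (fa_word v) = (fa_word (u @ v) :: 'k::comm_ring_1 fa)"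
proof
  fix w :: "bool list"
  have "fa_mult (fa_word u) (fa_word v) w =
        (\<Sum>i\<le>length w. if i = length u then (if w = u @ v then 1 else 0) else (0::'k))"
    unfolding fa_mult_def fa_word_def by (intro sum.cong refl fa_mult_word_term) simp
  also have "\<dots> = (fa_word (u @ v) :: 'k fa) w"
    by (cases "length u \<le> length w") (auto simp: fa_word_def)
  finally show "fa_mult (fa_word u) (fa_word v) w = (fa_word (u @ v) :: 'k fa) w" .
qed

lemma fa_mult_one [simp]:
  fixes f :: "'k::comm_ring_1 fa"
  shows "fa_mult fa_one f = f" "fa_mult f fa_one = f"
proof -
  have "fa_mult fa_one f w = (\<Sum>i\<le>length w. if i = 0 then f w else 0)" for w
    unfolding fa_mult_def fa_one_def fa_word_def
  proof (intro sum.cong refl)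
    fix i assume "i \<in> {..length w}"
    thus "(if take i w = [] then 1 else 0) * f (drop i w) = (if i = 0 then f w else 0)"
      by (cases "i = 0") auto
  qed
  thus "fa_mult fa_one f = f" by auto
  have "fa_mult f fa_one w = (\<Sum>i\<le>length w. if i = length w then f w else 0)" for w
    unfolding fa_mult_def fa_one_def fa_word_def by (intro sum.cong refl) auto
  thus "fa_mult f fa_one = f" by auto
qed

lemma fa_mult_assoc:
  fixes f g h :: "'k::comm_ring_1 fa"
  shows "fa_mult (fa_mult f g) h = fa_mult f (fa_mult g h)"
proof
  fix w :: "bool list"
  let ?N = "length w"
  let ?F = "\<lambda>j i. f (take j w) * g (drop j (take i w)) * h (drop i w)"
  have "fa_mult (fa_mult f g) h w = (\<Sum>i\<le>?N. \<Sum>j\<in>{j\<in>{..?N}. j \<le> i}. ?F j i)"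
    unfolding fa_mult_def
  proof (intro sum.cong refl)
    fix i assume "i \<in> {..?N}"
    hence e: "{j\<in>{..?N}. j \<le> i} = {..i}" "length (take i w) = i" by auto
    show "(\<Sum>j\<le>length (take i w). f (take j (take i w)) * g (drop j (take i w))) * h (drop i w)
          = (\<Sum>j\<in>{j\<in>{..?N}. j \<le> i}. ?F j i)"
      unfolding e sum_distrib_right using e(2) by (intro sum.cong refl) (simp add: min_def)
  qed
  also have "\<dots> = (\<Sum>j\<le>?N. \<Sum>i\<in>{i\<in>{..?N}. j \<le> i}. ?F j i)"
    by (rule sum.swap_restrict) auto
  also have "\<dots> = (\<Sum>j\<le>?N. f (take j w) *
                    (\<Sum>k\<le>?N - j. g (take k (drop j w)) * h (drop k (drop j w))))"
  proof (intro sum.cong refl)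
    fix j assume "j \<in> {..?N}"
    hence e: "{i\<in>{..?N}. j \<le> i} = {0 + j..(?N - j) + j}" by auto
    show "(\<Sum>i\<in>{i\<in>{..?N}. j \<le> i}. ?F j i) =
          f (take j w) * (\<Sum>k\<le>?N - j. g (take k (drop j w)) * h (drop k (drop j w)))"
      unfolding e sum.shift_bounds_cl_nat_ivl sum_distrib_left atLeast0AtMost
      by (intro sum.cong refl) (simp add: take_drop mult.assoc add.commute)
  qed
  also have "\<dots> = fa_mult f (fa_mult g h) w"
    unfolding fa_mult_def by simp
  finally show "fa_mult (fa_mult f g) h w = fa_mult f (fa_mult g h) w" .
qed

lemmas fa_mult_distribs = fa_mult_add_left fa_mult_add_right fa_mult_smult_left
  fa_mult_smult_right fa_mult_diff_left fa_mult_diff_right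

lemma fa_smult_smult [simp]: "fa_smult c (fa_smult d f) = fa_smult (c * d) (f :: 'k::comm_ring_1 fa)"
  by (simp add: fa_smult_def mult.assoc)

lemma fa_smult_one [simp]: "fa_smult 1 (f :: 'k::comm_ring_1 fa) = f"
  by (simp add: fa_smult_def)

lemma fa_smult_zero [simp]:
  "fa_smult c fa_zero = (fa_zero :: 'k::comm_ring_1 fa)" "fa_smult 0 f = (fa_zero :: 'k fa)"
  by (simp_all add: fa_smult_def fa_zero_def)

lemma fa_diff_self [simp]: "fa_diff f f = (fa_zero :: 'k::comm_ring_1 fa)"
  by (simp add: fa_diff_def fa_zero_def)

lemma fa_diff_zero [simp]: "fa_diff f fa_zero = (f :: 'k::comm_ring_1 fa)"
  by (simp add: fa_diff_def fa_zero_def)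

lemma fa_add_zero [simp]: "fa_add f fa_zero = (f :: 'k::comm_ring_1 fa)" "fa_add fa_zero f = f"
  by (simp_all add: fa_add_def fa_zero_def)

lemma fa_diff_eq_add_neg: "fa_diff f g = fa_add f (fa_smult (-1) (g :: 'k::comm_ring_1 fa))"
  by (simp add: fa_diff_def fa_add_def fa_smult_def)

lemma fa_induct [consumes 1, case_names zero step]:
  fixes f :: "'k::comm_ring_1 fa"
  assumes f: "f \<in> FA" and zero: "P fa_zero"
    and step: "\<And>h c u. h \<in> FA \<Longrightarrow> P h \<Longrightarrow> f u \<noteq> 0 \<Longrightarrow> P (fa_add h (fa_smult c (fa_word u)))"
  shows "P f"
proof -
  have "P (\<lambda>w. if w \<in> F then f w else 0)" if "finite F" "F \<subseteq> supp f" for F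
    using that
  proof (induction rule: finite_subset_induct)
    case empty
    thus ?case using zero by (simp add: fa_zero_def)
  next
    case (insert u F)
    have "(\<lambda>w. if w \<in> insert u F then f w else 0) =
          fa_add (\<lambda>w. if w \<in> F then f w else 0) (fa_smult (f u) (fa_word u))"
      using insert(3) by (auto simp: fa_add_def fa_smult_def fa_word_def)
    moreover have "(\<lambda>w. if w \<in> F then f w else 0) \<in> FA"
      unfolding FA_iff by (rule finite_subset[OF _ insert(1)]) auto
    ultimately show ?case using insert step by auto
  qed
  moreover have "(\<lambda>w. if w \<in> supp f then f w else 0) = f" by auto
  ultimately show ?thesis using f by (metis FA_iff order_refl)
qed

lemma pow_Zg: "fa_pow Zg m = (fa_word (replicate m True) :: 'k::comm_ring_1 fa)"
  by (induction m) (simp_all add: fa_pow_def fa_one_def Zg_def)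

lemma Jg_word: "Jg n = (fa_word (replicate (2*n) True) :: 'k::comm_ring_1 fa)"
  by (simp add: Jg_def pow_Zg)

section \<open>Congruence modulo a two-sided ideal\<close>

locale fa_quotient =
  fixes R :: "'k::comm_ring_1 fa set"
  assumes rels_FA: "R \<subseteq> FA"
begin

abbreviation I :: "'k fa set" where "I \<equiv> fa_ideal R"

lemma ideal_FA: "x \<in> I \<Longrightarrow> x \<in> FA"
  by (induction rule: fa_ideal.induct) (use rels_FA in auto)

lemma ideal_gen: "r \<in> R \<Longrightarrow> r \<in> I"
  using fa_ideal.gen[of r R fa_one fa_one] by simp

lemma ideal_mult_left: "x \<in> I \<Longrightarrow> g \<in> FA \<Longrightarrow> fa_mult g x \<in> I"
proof (induction rule: fa_ideal.induct)
  case (gen r u v)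
  thus ?case using fa_ideal.gen[of r R "fa_mult g u" v] by (simp add: fa_mult_assoc)
qed (simp_all add: fa_ideal.zero fa_mult_add_right fa_ideal.add)

lemma ideal_mult_right: "x \<in> I \<Longrightarrow> g \<in> FA \<Longrightarrow> fa_mult x g \<in> I"
proof (induction rule: fa_ideal.induct)
  case (gen r u v)
  thus ?case using fa_ideal.gen[of r R u "fa_mult v g"] by (simp add: fa_mult_assoc)
qed (simp_all add: fa_ideal.zero fa_mult_add_left fa_ideal.add)

lemma ideal_smult: "x \<in> I \<Longrightarrow> fa_smult c x \<in> I"
proof (induction rule: fa_ideal.induct)
  case (gen r u v)
  thus ?case using fa_ideal.gen[of r R "fa_smult c u" v] by (simp add: fa_mult_smult_left)
next
  case (add f h)
  have "fa_smult c (fa_add f h) = fa_add (fa_smult c f) (fa_smult c h)"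
    by (simp add: fa_smult_def fa_add_def distrib_left)
  thus ?case using add by (simp add: fa_ideal.add)
qed (simp add: fa_ideal.zero)

lemma ideal_diff: "x \<in> I \<Longrightarrow> y \<in> I \<Longrightarrow> fa_diff x y \<in> I"
  by (simp add: fa_diff_eq_add_neg fa_ideal.add ideal_smult)

lemma ideal_lincomb:
  "finite S \<Longrightarrow> (\<And>w. w \<in> S \<Longrightarrow> \<phi> w \<in> I) \<Longrightarrow> (\<lambda>b. \<Sum>w\<in>S. c w * \<phi> w b) \<in> I"
proof (induction rule: finite_induct)
  case empty
  thus ?case using fa_ideal.zero by (simp add: fa_zero_def)
next
  case (insert a F)
  have "(\<lambda>b. \<Sum>w\<in>insert a F. c w * \<phi> w b) =
        fa_add (fa_smult (c a) (\<phi> a)) (\<lambda>b. \<Sum>w\<in>F. c w * \<phi> w b)"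
    using insert by (simp add: fa_add_def fa_smult_def)
  thus ?case using insert by (simp add: fa_ideal.add ideal_smult)
qed

lemma ideal_of_subset: "x \<in> fa_ideal S \<Longrightarrow> S \<subseteq> I \<Longrightarrow> x \<in> I"
proof (induction rule: fa_ideal.induct)
  case (gen r u v)
  thus ?case by (blast intro: ideal_mult_left ideal_mult_right)
qed (simp_all add: fa_ideal.zero fa_ideal.add)

definition eq_mod :: "'k fa \<Rightarrow> 'k fa \<Rightarrow> bool" (infix "\<approx>" 50) where
  "f \<approx> g \<longleftrightarrow> fa_diff f g \<in> I"

lemma eq_mod_refl [simp]: "f \<approx> f"
  by (simp add: eq_mod_def fa_ideal.zero)

lemma eq_mod_sym: "f \<approx> g \<Longrightarrow> g \<approx> f"
proof -
  have "fa_diff g f = fa_smult (-1) (fa_diff f g)" by (simp add: fa_diff_def fa_smult_def)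
  thus "f \<approx> g \<Longrightarrow> g \<approx> f" by (simp add: eq_mod_def ideal_smult)
qed

lemma eq_mod_trans [trans]: "f \<approx> g \<Longrightarrow> g \<approx> h \<Longrightarrow> f \<approx> h"
proof -
  have "fa_diff f h = fa_add (fa_diff f g) (fa_diff g h)" by (simp add: fa_diff_def fa_add_def)
  thus "f \<approx> g \<Longrightarrow> g \<approx> h \<Longrightarrow> f \<approx> h" by (simp add: eq_mod_def fa_ideal.add)
qed

lemma eq_mod_add: "f \<approx> f' \<Longrightarrow> g \<approx> g' \<Longrightarrow> fa_add f g \<approx> fa_add f' g'"
proof -
  have "fa_diff (fa_add f g) (fa_add f' g') = fa_add (fa_diff f f') (fa_diff g g')"
    by (simp add: fa_diff_def fa_add_def algebra_simps)
  thus "f \<approx> f' \<Longrightarrow> g \<approx> g' \<Longrightarrow> fa_add f g \<approx> fa_add f' g'" by (simp add: eq_mod_def fa_ideal.add)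
qed

lemma eq_mod_diff: "f \<approx> f' \<Longrightarrow> g \<approx> g' \<Longrightarrow> fa_diff f g \<approx> fa_diff f' g'"
proof -
  have "fa_diff (fa_diff f g) (fa_diff f' g') = fa_diff (fa_diff f f') (fa_diff g g')"
    by (simp add: fa_diff_def algebra_simps)
  thus "f \<approx> f' \<Longrightarrow> g \<approx> g' \<Longrightarrow> fa_diff f g \<approx> fa_diff f' g'" by (simp add: eq_mod_def ideal_diff)
qed

lemma eq_mod_smult: "f \<approx> f' \<Longrightarrow> fa_smult c f \<approx> fa_smult c f'"
proof -
  have "fa_diff (fa_smult c f) (fa_smult c f') = fa_smult c (fa_diff f f')"
    by (simp add: fa_diff_def fa_smult_def right_diff_distrib)
  thus "f \<approx> f' \<Longrightarrow> fa_smult c f \<approx> fa_smult c f'" by (simp add: eq_mod_def ideal_smult)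
qed

lemma eq_mod_mult_left: "f \<approx> f' \<Longrightarrow> h \<in> FA \<Longrightarrow> fa_mult h f \<approx> fa_mult h f'"
  by (simp add: eq_mod_def ideal_mult_left flip: fa_mult_diff_right)

lemma eq_mod_mult_right: "f \<approx> f' \<Longrightarrow> h \<in> FA \<Longrightarrow> fa_mult f h \<approx> fa_mult f' h"
  by (simp add: eq_mod_def ideal_mult_right flip: fa_mult_diff_left)

lemma eq_mod_mult:
  "f \<approx> f' \<Longrightarrow> g \<approx> g' \<Longrightarrow> f \<in> FA \<Longrightarrow> g' \<in> FA \<Longrightarrow> fa_mult f g \<approx> fa_mult f' g'"
  by (meson eq_mod_mult_left eq_mod_mult_right eq_mod_trans)

lemma eq_mod_zero_iff: "f \<approx> fa_zero \<longleftrightarrow> f \<in> I"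
  by (simp add: eq_mod_def)

lemma eq_mod_ideal: "f \<approx> g \<Longrightarrow> g \<in> I \<Longrightarrow> f \<in> I"
  by (metis eq_mod_trans eq_mod_zero_iff)

lemma eq_mod_word_context:
  assumes "fa_word r \<approx> fa_smult c (fa_word s)"
  shows "fa_word (u @ r @ v) \<approx> fa_smult c (fa_word (u @ s @ v))"
proof -
  have "fa_mult (fa_mult (fa_word u) (fa_word r)) (fa_word v) \<approx>
        fa_mult (fa_mult (fa_word u) (fa_smult c (fa_word s))) (fa_word v)"
    by (intro eq_mod_mult_right eq_mod_mult_left assms) simp_all
  thus ?thesis by (simp add: fa_mult_distribs)
qed

lemma eq_mod_word_context1:
  "fa_word r \<approx> fa_word s \<Longrightarrow> fa_word (u @ r @ v) \<approx> fa_word (u @ s @ v)"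
  using eq_mod_word_context[of r 1 s u v] by simp

lemma hom_word_eq_mod:
  assumes "u1 \<approx> u2" "\<And>c. g1 c \<approx> g2 c" "u2 \<in> FA" "\<And>c. g1 c \<in> FA" "\<And>c. g2 c \<in> FA"
  shows "hom_word fa_mult u1 g1 xs \<approx> hom_word fa_mult u2 g2 xs"
proof (induction xs)
  case (Cons c xs)
  have "hom_word fa_mult u2 g2 xs \<in> FA" by (induction xs) (use assms in \<open>auto simp: hom_word_def\<close>)
  thus ?case using Cons assms by (simp add: hom_word_def eq_mod_mult)
qed (use assms in \<open>simp add: hom_word_def\<close>)

end

definition fa_two_sided_ideal :: "'k::comm_ring_1 fa set \<Rightarrow> bool" where
  "fa_two_sided_ideal A \<longleftrightarrow> fa_zero \<in> A \<and> (\<forall>f\<in>A. \<forall>g\<in>A. fa_add f g \<in> A)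
     \<and> (\<forall>f\<in>A. \<forall>g\<in>FA. fa_mult g f \<in> A \<and> fa_mult f g \<in> A)"

context fa_quotient
begin

lemma w_part_iff: "f \<in> w_part I e \<longleftrightarrow> f \<in> FA \<and> (\<exists>g\<in>FA. f \<approx> fa_mult g e)"
  by (simp add: w_part_def eq_mod_def)

lemma w_part_FA: "f \<in> w_part I e \<Longrightarrow> f \<in> FA"
  by (simp add: w_part_iff)

lemma mult_in_w_part: "g \<in> FA \<Longrightarrow> e \<in> FA \<Longrightarrow> fa_mult g e \<in> w_part I e"
  unfolding w_part_iff by (blast intro: FA_mult eq_mod_refl)

lemma w_part_two_sided_ideal:
  assumes e: "e \<in> FA" and central: "\<And>h. h \<in> FA \<Longrightarrow> fa_mult e h \<approx> fa_mult h e"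
  shows "fa_two_sided_ideal (w_part I e)"
  unfolding fa_two_sided_ideal_def
proof (intro conjI ballI)
  show "fa_zero \<in> w_part I e"
    using mult_in_w_part[OF FA_zero e] by simp
next
  fix f g assume "f \<in> w_part I e" "g \<in> w_part I e"
  then obtain f1 g1 where "f1 \<in> FA" "f \<approx> fa_mult f1 e" "g1 \<in> FA" "g \<approx> fa_mult g1 e"
    and "f \<in> FA" "g \<in> FA" by (auto simp: w_part_iff)
  moreover from this have "fa_add f g \<approx> fa_mult (fa_add f1 g1) e"
    by (simp add: eq_mod_add fa_mult_add_left)
  ultimately show "fa_add f g \<in> w_part I e" by (auto simp: w_part_iff)
next
  fix f h :: "'k fa" assume f: "f \<in> w_part I e" and h: "h \<in> FA"
  then obtain f1 where f1: "f1 \<in> FA" "f \<approx> fa_mult f1 e" and "f \<in> FA" by (auto simp: w_part_iff)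
  have "fa_mult h f \<approx> fa_mult (fa_mult h f1) e"
    using eq_mod_mult_left[OF f1(2) h] by (simp add: fa_mult_assoc)
  thus "fa_mult h f \<in> w_part I e" using \<open>f \<in> FA\<close> h f1 by (auto simp: w_part_iff)
  have "fa_mult f h \<approx> fa_mult f1 (fa_mult e h)"
    using eq_mod_mult_right[OF f1(2) h] by (simp add: fa_mult_assoc)
  also have "\<dots> \<approx> fa_mult (fa_mult f1 h) e"
    using eq_mod_mult_left[OF central[OF h] f1(1)] by (simp add: fa_mult_assoc)
  finally show "fa_mult f h \<in> w_part I e" using \<open>f \<in> FA\<close> h f1 by (auto simp: w_part_iff)
qed

lemma central_complement:
  assumes "\<And>h. h \<in> FA \<Longrightarrow> fa_mult e h \<approx> fa_mult h e"
  shows "h \<in> FA \<Longrightarrow> fa_mult (fa_diff fa_one e) h \<approx> fa_mult h (fa_diff fa_one e)"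
  using assms by (simp add: fa_mult_diff_left fa_mult_diff_right eq_mod_diff)

lemma w_part_absorb:
  assumes f: "f \<in> w_part I e" and e: "e \<in> FA" "fa_mult e e \<approx> e"
  shows "f \<approx> fa_mult f e"
proof -
  obtain g where g: "g \<in> FA" "f \<approx> fa_mult g e" using f by (auto simp: w_part_iff)
  have "fa_mult f e \<approx> fa_mult g (fa_mult e e)"
    using eq_mod_mult_right[OF g(2) e(1)] by (simp add: fa_mult_assoc)
  also have "\<dots> \<approx> fa_mult g e" by (rule eq_mod_mult_left[OF e(2) g(1)])
  also have "\<dots> \<approx> f" by (rule eq_mod_sym[OF g(2)])
  finally show ?thesis by (rule eq_mod_sym)
qed

lemma w_part_complement_decomposition:
  assumes "f \<in> FA" "e \<in> FA"
  shows "\<exists>g\<in>w_part I e. \<exists>h\<in>w_part I (fa_diff fa_one e). fa_diff f (fa_add g h) \<in> I"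
proof (intro bexI)
  have "fa_mult f (fa_diff fa_one e) = fa_diff f (fa_mult f e)"
    by (simp add: fa_mult_diff_right)
  hence "fa_diff f (fa_add (fa_mult f e) (fa_mult f (fa_diff fa_one e))) = fa_zero"
    by (simp add: fa_diff_def fa_add_def fa_zero_def)
  thus "fa_diff f (fa_add (fa_mult f e) (fa_mult f (fa_diff fa_one e))) \<in> I"
    by (simp add: fa_ideal.zero)
qed (use assms mult_in_w_part in simp_all)

lemma w_part_complement_inter:
  assumes f: "f \<in> w_part I e" "f \<in> w_part I (fa_diff fa_one e)"
    and e: "e \<in> FA" "fa_mult e e \<approx> e"
  shows "f \<in> I"
proof -
  obtain h where h: "h \<in> FA" "f \<approx> fa_mult h (fa_diff fa_one e)"
    using f(2) by (auto simp: w_part_iff)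
  have "f \<approx> fa_mult f e" by (rule w_part_absorb[OF f(1) e])
  also have "\<dots> \<approx> fa_mult h (fa_diff e (fa_mult e e))"
    using eq_mod_mult_right[OF h(2) e(1)] by (simp add: fa_mult_assoc fa_mult_diff_left)
  also have "\<dots> \<approx> fa_mult h fa_zero"
    using eq_mod_mult_left[OF eq_mod_diff[OF eq_mod_refl[of e] e(2)] h(1)] by simp
  finally show "f \<in> I" by (simp add: eq_mod_zero_iff)
qed

end

section \<open>The central idempotent \<open>J\<close> of \<open>wH\<^sub>4\<^sub>n\<close>\<close>

locale wH4n =
  fixes n :: nat and q :: "'k::field"
  assumes n_pos: "n \<ge> 1" and q_pow_n: "q ^ n = -1"
begin

lemma q_pow_2n: "q ^ (2*n) = 1"
proof -
  have "q ^ (2*n) = (q ^ n)\<^sup>2" by (metis mult.commute power_mult)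
  thus ?thesis by (simp add: q_pow_n)
qed

lemma wH_rels_words: "wH_rels n q =
  {fa_diff (fa_word (replicate (2*n+1) True)) (fa_word [True]),
   fa_diff (fa_word [True, False]) (fa_smult q (fa_word [False, True])),
   fa_word [False, False]}"
  unfolding wH_rels_def pow_Zg by (simp add: Zg_def Xg_def)

sublocale fa_quotient "wH_rels n q"
  by unfold_locales (simp add: wH_rels_words)

notation eq_mod (infix "\<approx>" 50)

lemma Z_power_rel: "fa_word (replicate (2*n+1) True) \<approx> fa_word [True]"
  unfolding eq_mod_def by (rule ideal_gen) (simp add: wH_rels_words)

lemma ZX_rel: "fa_word [True, False] \<approx> fa_smult q (fa_word [False, True])"
  unfolding eq_mod_def by (rule ideal_gen) (simp add: wH_rels_words)

lemma word_XX_in_ideal: "fa_word (u @ [False, False] @ v) \<in> I"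
proof -
  have "fa_word [False, False] \<in> I"
    by (rule ideal_gen) (simp add: wH_rels_words)
  hence "fa_word [False, False] \<approx> fa_smult 0 (fa_word [])"
    by (simp add: eq_mod_zero_iff)
  from eq_mod_word_context[OF this, of u v] show ?thesis by (simp add: eq_mod_def)
qed

lemma Z_pow_X_commute:
  "fa_word (replicate m True @ [False]) \<approx> fa_smult (q ^ m) (fa_word (False # replicate m True))"
proof (induction m)
  case (Suc m)
  have "fa_word (True # replicate m True @ [False]) \<approx>
        fa_smult (q ^ m) (fa_word (True # False # replicate m True))"
    using eq_mod_word_context[OF Suc, of "[True]" "[]"] by simp
  also have "\<dots> \<approx> fa_smult (q ^ m * q) (fa_word (False # True # replicate m True))"
    using eq_mod_smult[OF eq_mod_word_context[OF ZX_rel, of "[]" "replicate m True"], of "q ^ m"]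
    by simp
  finally show ?case by (simp add: mult.commute)
qed simp

lemma Z_2n_word_commute:
  "fa_word (replicate (2*n) True @ w) \<approx> fa_word (w @ replicate (2*n) True)"
proof (induction w)
  case (Cons c w)
  show ?case
  proof (cases c)
    case True
    thus ?thesis using eq_mod_word_context1[OF Cons, of "[True]" "[]"]
      by (simp add: replicate_app_Cons_same)
  next
    case False
    have "fa_word (replicate (2*n) True @ False # w) \<approx> fa_word (False # replicate (2*n) True @ w)"
      using eq_mod_word_context[OF Z_pow_X_commute[of "2*n"], of "[]" w] by (simp add: q_pow_2n)
    also have "\<dots> \<approx> fa_word (False # w @ replicate (2*n) True)"
      using eq_mod_word_context1[OF Cons, of "[False]" "[]"] by simp
    finally show ?thesis using False by simp
  qed
qed simp

lemma word_absorbs_Z_2n: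
  assumes "True \<in> set u"
  shows "fa_word u \<approx> fa_word (u @ replicate (2*n) True)"
proof -
  obtain a b where u: "u = a @ True # b" using assms by (meson split_list)
  have "fa_word (a @ True # b @ replicate (2*n) True) \<approx>
        fa_word (a @ True # replicate (2*n) True @ b)"
    using eq_mod_word_context1[OF eq_mod_sym[OF Z_2n_word_commute], of "a @ [True]" b "[]"] by simp
  also have "\<dots> \<approx> fa_word (a @ True # b)"
    using eq_mod_word_context1[OF Z_power_rel, of a b] by simp
  finally show ?thesis using u by (simp add: eq_mod_sym)
qed

abbreviation J :: "'k fa" where "J \<equiv> Jg n"
abbreviation Jc :: "'k fa" where "Jc \<equiv> fa_diff fa_one J"
abbreviation w1 :: "'k fa set" where "w1 \<equiv> w_part I J"
abbreviation w2 :: "'k fa set" where "w2 \<equiv> w_part I Jc"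

lemma J_FA [simp]: "J \<in> FA"
  by (simp add: Jg_word)

lemma Jc_FA [simp]: "Jc \<in> FA"
  by simp

lemma J_central: "h \<in> FA \<Longrightarrow> fa_mult J h \<approx> fa_mult h J"
proof (induction rule: fa_induct)
  case (step h c u)
  have "fa_add (fa_mult J h) (fa_smult c (fa_word (replicate (2*n) True @ u))) \<approx>
        fa_add (fa_mult h J) (fa_smult c (fa_word (u @ replicate (2*n) True)))"
    by (intro eq_mod_add eq_mod_smult step Z_2n_word_commute)
  thus ?case by (simp add: fa_mult_distribs Jg_word)
qed simp

lemma J_idem: "fa_mult J J \<approx> J"
  using eq_mod_sym[OF word_absorbs_Z_2n[of "replicate (2*n) True"]] n_pos by (simp add: Jg_word)

lemma w1_absorb: "f \<in> w1 \<Longrightarrow> f \<approx> fa_mult f J"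
  using w_part_absorb J_idem by simp

lemma smult_word_in_w1: "True \<in> set u \<Longrightarrow> fa_smult c (fa_word u) \<in> w1"
  using eq_mod_smult[OF word_absorbs_Z_2n, of u c]
  by (auto simp: w_part_iff fa_mult_distribs Jg_word intro!: bexI[of _ "fa_smult c (fa_word u)"])

end

lemma lin_ext_fa_word: "f \<in> FA \<Longrightarrow> lin_ext fa_word f = (f :: 'k::comm_ring_1 fa)"
proof
  fix b assume "f \<in> FA"
  hence "(\<Sum>w\<in>supp f. if w = b then f w else 0) = f b" by (simp add: FA_iff)
  moreover have "lin_ext fa_word f b = (\<Sum>w\<in>supp f. if w = b then f w else 0)"
    unfolding lin_ext_def fa_word_def by (intro sum.cong) auto
  ultimately show "lin_ext fa_word f b = f b" by simp
qed

lemma lin_ext_FA: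
  fixes f :: "'k::comm_ring_1 fa"
  assumes "f \<in> FA" "\<And>w. \<phi> w \<in> FA"
  shows "lin_ext \<phi> f \<in> FA"
proof -
  have "supp (lin_ext \<phi> f) \<subseteq> (\<Union>w\<in>supp f. supp (\<phi> w))"
  proof
    fix b assume "b \<in> supp (lin_ext \<phi> f)"
    hence "(\<Sum>w\<in>supp f. f w * \<phi> w b) \<noteq> 0" by (simp add: lin_ext_def)
    then obtain w where "w \<in> supp f" "f w * \<phi> w b \<noteq> 0" by (meson sum.neutral)
    thus "b \<in> (\<Union>w\<in>supp f. supp (\<phi> w))" by auto
  qed
  moreover have "finite (\<Union>w\<in>supp f. supp (\<phi> w))" using assms by (auto simp: FA_iff)
  ultimately show ?thesis by (simp add: FA_iff finite_subset)
qed

lemma lin_ext_diff: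
  "fa_diff (lin_ext \<phi>1 f) (lin_ext \<phi>2 f) = (\<lambda>b. \<Sum>w\<in>supp f. f w * fa_diff (\<phi>1 w) (\<phi>2 w) b)"
  by (simp add: lin_ext_def fa_diff_def right_diff_distrib sum_subtractf)

lemma hom_word_FA:
  "u \<in> FA \<Longrightarrow> (\<And>c. g c \<in> FA) \<Longrightarrow> hom_word fa_mult u g xs \<in> (FA :: 'k::comm_ring_1 fa set)"
  by (induction xs) (simp_all add: hom_word_def)

lemma antipode_w1_FA: "f \<in> FA \<Longrightarrow> antipode_w1 n f \<in> (FA :: 'k::comm_ring_1 fa set)"
  unfolding antipode_w1_def
  by (intro lin_ext_FA hom_word_FA) (simp_all add: pow_Zg Xg_def Jg_word)

section \<open>\<open>wH J\<close> is isomorphic to \<open>H\<^sub>4\<^sub>n\<close>\<close>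

context wH4n
begin

lemma H_rels_words: "H_rels n q =
  {fa_diff J fa_one,
   fa_diff (fa_word [True, False]) (fa_smult q (fa_word [False, True])),
   fa_word [False, False]}"
  unfolding H_rels_def Jg_def by (simp add: Zg_def Xg_def)

sublocale H: fa_quotient "H_rels n q"
  by unfold_locales (simp add: H_rels_words Jg_word)

notation H.eq_mod (infix "\<approx>\<^sub>H" 50)

lemma J_eq_one_mod_H: "J \<approx>\<^sub>H fa_one"
  unfolding H.eq_mod_def by (rule H.ideal_gen) (simp add: H_rels_words)

lemma ideal_subset_ideal_H: "I \<subseteq> H.I"
proof -
  have "fa_mult (fa_word [True]) (fa_diff J fa_one) \<in> H.I"
    using J_eq_one_mod_H by (intro H.ideal_mult_left) (simp_all add: H.eq_mod_def)
  hence "fa_diff (fa_word (replicate (2*n+1) True)) (fa_word [True]) \<in> H.I"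
    by (simp add: fa_mult_distribs Jg_word fa_one_def)
  hence "wH_rels n q \<subseteq> H.I"
    using H.ideal_gen by (auto simp: wH_rels_words H_rels_words)
  thus ?thesis using H.ideal_of_subset by blast
qed

lemma ideal_H_mult_J: "x \<in> H.I \<Longrightarrow> fa_mult x J \<in> I"
proof (induction rule: fa_ideal.induct)
  case (gen r u v)
  have r: "r \<in> FA" using gen(1) H.rels_FA by blast
  have "fa_mult r J \<in> I"
  proof (cases "r = fa_diff J fa_one")
    case True
    thus ?thesis using J_idem by (simp add: fa_mult_diff_left eq_mod_def)
  next
    case False
    hence "r \<in> wH_rels n q" using gen(1) by (auto simp: H_rels_words wH_rels_words)
    thus ?thesis by (intro ideal_mult_right ideal_gen) auto
  qed
  hence "fa_mult (fa_mult u (fa_mult r J)) v \<in> I"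
    using gen by (simp add: ideal_mult_right ideal_mult_left)
  moreover have "fa_mult (fa_mult (fa_mult u r) v) J \<approx> fa_mult (fa_mult u (fa_mult r J)) v"
    using eq_mod_mult_left[OF eq_mod_sym[OF J_central[of v]], of "fa_mult u r"] gen(2,3) r
    by (simp add: fa_mult_assoc)
  ultimately show ?case by (rule eq_mod_ideal[rotated])
qed (simp_all add: fa_ideal.zero fa_mult_add_left fa_ideal.add)

lemma w1_inter_ideal_H: "f \<in> w1 \<Longrightarrow> f \<in> H.I \<Longrightarrow> f \<in> I"
  using w1_absorb ideal_H_mult_J eq_mod_ideal by blast

lemma w1_onto_H: "h \<in> FA \<Longrightarrow> fa_mult h J \<in> w1 \<and> fa_mult h J \<approx>\<^sub>H h"
  using mult_in_w_part H.eq_mod_mult_left[OF J_eq_one_mod_H] by simp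

lemma antipode_w1_eq_mod_antipode_H:
  assumes "f \<in> FA"
  shows "antipode_w1 n f \<approx>\<^sub>H antipode_H n f"
proof -
  let ?S1 = "\<lambda>c. if c then fa_pow Zg (2*n-1) else fa_smult (-1) (fa_mult (fa_mult (fa_pow Zg n) Xg) J)"
  let ?S = "\<lambda>c. if c then fa_pow Zg (2*n-1) else fa_smult (-1) (fa_mult (fa_pow Zg n) Xg)"
  have S1_FA: "?S1 c \<in> FA" and S_FA: "?S c \<in> FA" for c
    by (auto simp: pow_Zg Xg_def Jg_word)
  have "?S1 c \<approx>\<^sub>H ?S c" for c
    using H.eq_mod_smult[OF H.eq_mod_mult_left[OF J_eq_one_mod_H]]
    by (auto simp: pow_Zg Xg_def)
  hence "hom_word fa_mult J ?S1 w \<approx>\<^sub>H hom_word fa_mult fa_one ?S w" for w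
    by (intro H.hom_word_eq_mod J_eq_one_mod_H S1_FA S_FA) simp_all
  hence "fa_diff (antipode_w1 n f) (antipode_H n f) \<in> H.I"
    unfolding antipode_w1_def antipode_H_def lin_ext_diff
    using assms by (intro H.ideal_lincomb) (simp_all add: FA_iff H.eq_mod_def)
  thus ?thesis by (simp add: H.eq_mod_def)
qed

end

section \<open>\<open>wH (1 - J)\<close> is isomorphic to \<open>k[y]/(y\<^sup>2)\<close>\<close>

definition chi_word :: "bool list \<Rightarrow> 'k::comm_ring_1 poly" where
  "chi_word w = (if True \<in> set w then 0 else monom 1 (length w))"

abbreviation chi :: "'k::comm_ring_1 fa \<Rightarrow> 'k poly" where
  "chi \<equiv> lin_ext_poly chi_word"

lemma chi_word_append: "chi_word (u @ v) = chi_word u * chi_word v"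
  by (simp add: chi_word_def mult_monom)

lemma chi_eq_sum_superset:
  fixes f :: "'k::comm_ring_1 fa"
  assumes "finite S" "supp f \<subseteq> S"
  shows "chi f = (\<Sum>w\<in>S. smult (f w) (chi_word w))"
  unfolding lin_ext_poly_def using assms by (intro sum.mono_neutral_left) auto

lemma chi_add: "f \<in> FA \<Longrightarrow> g \<in> FA \<Longrightarrow> chi (fa_add f g) = chi f + chi (g :: 'k::comm_ring_1 fa)"
proof -
  assume "f \<in> FA" "g \<in> FA"
  hence fin: "finite (supp f \<union> supp g)" by (simp add: FA_iff)
  have "chi (fa_add f g) = (\<Sum>w\<in>supp f \<union> supp g. smult (fa_add f g w) (chi_word w))"
    by (rule chi_eq_sum_superset[OF fin]) (auto simp: fa_add_def)
  also have "\<dots> = chi f + chi g"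
    using chi_eq_sum_superset[OF fin, of f] chi_eq_sum_superset[OF fin, of g]
    by (simp add: fa_add_def smult_add_left sum.distrib)
  finally show ?thesis .
qed

lemma smult_sum_right: "smult c (\<Sum>i\<in>S. f i) = (\<Sum>i\<in>S. smult c (f i))"
  by (induction S rule: infinite_finite_induct) (simp_all add: smult_add_right)

lemma chi_smult: "f \<in> FA \<Longrightarrow> chi (fa_smult c f) = smult c (chi (f :: 'k::comm_ring_1 fa))"
proof -
  assume "f \<in> FA"
  hence "chi (fa_smult c f) = (\<Sum>w\<in>supp f. smult (fa_smult c f w) (chi_word w))"
    by (intro chi_eq_sum_superset) (auto simp: FA_iff fa_smult_def)
  thus ?thesis by (simp add: fa_smult_def lin_ext_poly_def smult_sum_right)
qed

lemma chi_diff: "f \<in> FA \<Longrightarrow> g \<in> FA \<Longrightarrow> chi (fa_diff f g) = chi f - chi (g :: 'k::comm_ring_1 fa)"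
  by (simp add: fa_diff_eq_add_neg chi_add chi_smult)

lemma chi_zero [simp]: "chi (fa_zero :: 'k::comm_ring_1 fa) = 0"
  by (simp add: lin_ext_poly_def fa_zero_def)

lemma chi_fa_word [simp]: "chi (fa_word u :: 'k::comm_ring_1 fa) = chi_word u"
proof -
  have "chi (fa_word u :: 'k fa) = (\<Sum>w\<in>{u}. smult (fa_word u w) (chi_word w))"
    by (rule chi_eq_sum_superset) (auto simp: fa_word_def)
  thus ?thesis by (simp add: fa_word_def)
qed

lemma chi_mult: "f \<in> FA \<Longrightarrow> g \<in> FA \<Longrightarrow> chi (fa_mult f g) = chi f * chi (g :: 'k::comm_ring_1 fa)"
proof (induction arbitrary: g rule: fa_induct)
  case (step h c u)
  have "chi (fa_mult (fa_word u) g) = chi_word u * chi g" using step(4)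
  proof (induction rule: fa_induct)
    case (step h' c' v)
    thus ?case by (simp add: fa_mult_distribs chi_add chi_smult chi_word_append algebra_simps)
  qed simp
  thus ?case using step by (simp add: fa_mult_distribs chi_add chi_smult algebra_simps)
qed simp

lemma chi_coeffs:
  fixes f :: "'k::comm_ring_1 fa"
  assumes "f \<in> FA"
  shows "coeff (chi f) 0 = f []" "coeff (chi f) 1 = f [False]"
proof -
  have fin: "finite (supp f)" using assms by (simp add: FA_iff)
  have "coeff (chi f) 0 = (\<Sum>w\<in>supp f. if w = [] then f w else 0)"
    unfolding lin_ext_poly_def coeff_sum by (intro sum.cong) (auto simp: chi_word_def)
  thus "coeff (chi f) 0 = f []" using fin by simp
  have "coeff (smult (f w) (chi_word w)) 1 = (if w = [False] then f w else 0)" for w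
    by (cases w rule: remdups_adj.cases) (auto simp: chi_word_def)
  hence "coeff (chi f) 1 = (\<Sum>w\<in>supp f. if w = [False] then f w else 0)"
    unfolding lin_ext_poly_def coeff_sum by simp
  thus "coeff (chi f) 1 = f [False]" using fin by simp
qed

lemma y2_dvd_imp_coeffs_zero:
  "[:0, 0, 1:] dvd (p :: 'k::comm_ring_1 poly) \<Longrightarrow> coeff p 0 = 0 \<and> coeff p 1 = 0"
  by (auto elim!: dvdE simp: coeff_pCons_0)

context wH4n
begin

lemma y2_dvd_chi_ideal: "x \<in> I \<Longrightarrow> [:0, 0, 1:] dvd chi x"
proof (induction rule: fa_ideal.induct)
  case (gen r u v)
  have "r \<in> FA" using gen(1) rels_FA by auto
  moreover have "[:0, 0, 1:] dvd chi r"
    using gen(1) by (auto simp: wH_rels_words chi_diff chi_smult chi_word_def monom_Suc monom_0)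
  ultimately show ?case using gen by (simp add: chi_mult)
qed (simp_all add: chi_add ideal_FA)

lemma chi_J: "chi J = 0"
  using n_pos by (simp add: Jg_word chi_word_def)

lemma chi_Jc: "chi Jc = 1"
  by (simp add: chi_diff chi_J fa_one_def chi_word_def)

lemma w1_coeffs_zero: "f \<in> w1 \<Longrightarrow> f [] = 0 \<and> f [False] = 0"
proof -
  assume "f \<in> w1"
  then obtain g where f: "f \<in> FA" and g: "g \<in> FA" "f \<approx> fa_mult g J" by (auto simp: w_part_iff)
  have "[:0, 0, 1:] dvd chi (fa_diff f (fa_mult g J))"
    using g(2) y2_dvd_chi_ideal by (simp add: eq_mod_def)
  hence "[:0, 0, 1:] dvd chi f" using f g by (simp add: chi_diff chi_mult chi_J)
  thus ?thesis using chi_coeffs[OF f] y2_dvd_imp_coeffs_zero by metis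
qed

lemma word_mult_Jc_in_ideal:
  assumes "u \<noteq> []" "u \<noteq> [False]"
  shows "fa_mult (fa_word u) Jc \<in> I"
proof (cases "True \<in> set u")
  case True
  have "fa_mult (fa_word u) Jc = fa_diff (fa_word u) (fa_word (u @ replicate (2*n) True))"
    by (simp add: fa_mult_diff_right fa_one_def Jg_word)
  thus ?thesis using word_absorbs_Z_2n[OF True] by (simp add: eq_mod_def)
next
  case False
  then obtain u' where "u = False # False # u'" using assms
    by (cases u rule: remdups_adj.cases) auto
  hence "fa_word u \<in> I" using word_XX_in_ideal[of "[]" u'] by simp
  thus ?thesis by (intro ideal_mult_right) (simp_all)
qed

lemma w2_inter_ker_chi:
  assumes "f \<in> w2" "[:0, 0, 1:] dvd chi f"
  shows "f \<in> I"
proof -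
  obtain g where f: "f \<in> FA" and g: "g \<in> FA" "f \<approx> fa_mult g Jc"
    using assms(1) by (auto simp: w_part_iff)
  have "[:0, 0, 1:] dvd chi (fa_diff f (fa_mult g Jc))"
    using g(2) y2_dvd_chi_ideal by (simp add: eq_mod_def)
  hence "[:0, 0, 1:] dvd chi f - chi g" using f g by (simp add: chi_diff chi_mult chi_Jc)
  from dvd_diff[OF assms(2) this] have "[:0, 0, 1:] dvd chi g" by simp
  hence g0: "g [] = 0" "g [False] = 0" using chi_coeffs[OF g(1)] y2_dvd_imp_coeffs_zero by metis+
  have "fa_mult g Jc \<in> I" using g(1)
  proof (induction rule: fa_induct)
    case (step h c u)
    hence "u \<noteq> []" "u \<noteq> [False]" using g0 by auto
    thus ?case using step word_mult_Jc_in_ideal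
      by (simp add: fa_mult_add_left fa_mult_smult_left fa_ideal.add ideal_smult)
  qed (simp add: fa_ideal.zero)
  thus "f \<in> I" using g(2) eq_mod_ideal by blast
qed

lemma chi_w2_surj: "\<exists>f\<in>w2. [:0, 0, 1:] dvd (chi f - p)"
proof -
  obtain c0 c1 r where p: "p = pCons c0 (pCons c1 r)" by (metis pCons_cases)
  define g where "g = fa_add (fa_smult c0 (fa_word [])) (fa_smult c1 (fa_word [False]))"
  have g: "g \<in> FA" by (simp add: g_def)
  have "chi (fa_mult g Jc) = [:c0, c1:]"
    using g by (simp add: g_def chi_mult chi_Jc chi_add chi_smult chi_word_def monom_Suc monom_0)
  hence "chi (fa_mult g Jc) - p = [:0, 0, 1:] * (- r)" by (simp add: p)
  thus ?thesis using mult_in_w_part[OF g Jc_FA] by (metis dvd_triv_left)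
qed

lemma w2_iso_dual_numbers:
  "\<exists>\<chi> :: bool list \<Rightarrow> 'k poly.
     (\<forall>f\<in>I. [:0, 0, 1:] dvd lin_ext_poly \<chi> f) \<and>
     (\<forall>f\<in>w2. \<forall>g\<in>w2. [:0, 0, 1:] dvd
        (lin_ext_poly \<chi> (fa_mult f g) - lin_ext_poly \<chi> f * lin_ext_poly \<chi> g)) \<and>
     [:0, 0, 1:] dvd (lin_ext_poly \<chi> Jc - 1) \<and>
     (\<forall>f\<in>w2. [:0, 0, 1:] dvd lin_ext_poly \<chi> f \<longrightarrow> f \<in> I) \<and>
     (\<forall>p. \<exists>f\<in>w2. [:0, 0, 1:] dvd (lin_ext_poly \<chi> f - p))"
  using y2_dvd_chi_ideal w2_inter_ker_chi chi_w2_surj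
  by (intro exI[of _ chi_word]) (auto simp: chi_mult chi_Jc w_part_FA)

end

section \<open>The tensor square\<close>

definition FA2 :: "'k::zero fa2 set" where
  "FA2 = {t. finite (supp t)}"

lemma FA2_iff: "t \<in> FA2 \<longleftrightarrow> finite (supp t)"
  by (simp add: FA2_def)

lemma FA2_zero [simp]: "(fa2_zero :: 'k::comm_ring_1 fa2) \<in> FA2"
  by (simp add: FA2_iff fa2_zero_def)

lemma FA2_one [simp]: "(fa2_one :: 'k::comm_ring_1 fa2) \<in> FA2"
  unfolding FA2_iff fa2_one_def by (rule finite_subset[of _ "{([], [])}"]) auto

lemma FA2_add [simp]: "s \<in> FA2 \<Longrightarrow> t \<in> FA2 \<Longrightarrow> fa2_add s t \<in> (FA2 :: 'k::comm_ring_1 fa2 set)"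
  unfolding FA2_iff fa2_add_def by (rule finite_subset[of _ "supp s \<union> supp t"]) auto

lemma FA2_smult [simp]: "s \<in> FA2 \<Longrightarrow> fa2_smult c s \<in> (FA2 :: 'k::comm_ring_1 fa2 set)"
  unfolding FA2_iff fa2_smult_def by (rule finite_subset[of _ "supp s"]) auto

lemma FA2_ftens [simp]: "f \<in> FA \<Longrightarrow> g \<in> FA \<Longrightarrow> ftens f g \<in> (FA2 :: 'k::comm_ring_1 fa2 set)"
  unfolding FA2_iff FA_iff ftens_def by (rule finite_subset[of _ "supp f \<times> supp g"]) auto

lemma FA2_lincomb:
  "(\<And>w. \<phi> w \<in> FA2) \<Longrightarrow> (\<lambda>b. \<Sum>w\<in>S. c w * \<phi> w b) \<in> (FA2 :: 'k::comm_ring_1 fa2 set)"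
proof (induction S rule: infinite_finite_induct)
  case (insert a F)
  have "(\<lambda>b. \<Sum>w\<in>insert a F. c w * \<phi> w b) =
        fa2_add (fa2_smult (c a) (\<phi> a)) (\<lambda>b. \<Sum>w\<in>F. c w * \<phi> w b)"
    using insert by (simp add: fa2_add_def fa2_smult_def)
  thus ?case using insert by simp
qed (simp_all add: FA2_iff)

lemma fa2_mult_nonzero_split:
  fixes s t :: "'k::comm_ring_1 fa2"
  assumes "fa2_mult s t (u, v) \<noteq> 0"
  shows "\<exists>i j. s (take i u, take j v) \<noteq> 0 \<and> t (drop i u, drop j v) \<noteq> 0"
proof -
  from assms obtain i where "(\<Sum>j\<le>length v. s (take i u, take j v) * t (drop i u, drop j v)) \<noteq> 0"
    unfolding fa2_mult_def by (auto elim: sum.not_neutral_contains_not_neutral)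
  then obtain j where "s (take i u, take j v) * t (drop i u, drop j v) \<noteq> 0"
    by (auto elim: sum.not_neutral_contains_not_neutral)
  thus ?thesis by (metis mult_not_zero)
qed

lemma FA2_mult [simp]:
  fixes s t :: "'k::comm_ring_1 fa2"
  assumes "s \<in> FA2" "t \<in> FA2"
  shows "fa2_mult s t \<in> FA2"
proof -
  have "supp (fa2_mult s t) \<subseteq> (\<lambda>((a, b), (c, d)). (a @ c, b @ d)) ` (supp s \<times> supp t)"
  proof
    fix p assume "p \<in> supp (fa2_mult s t)"
    moreover obtain u v where p: "p = (u, v)" by (cases p)
    ultimately obtain i j where "s (take i u, take j v) \<noteq> 0" "t (drop i u, drop j v) \<noteq> 0"
      using fa2_mult_nonzero_split by blast
    thus "p \<in> (\<lambda>((a, b), (c, d)). (a @ c, b @ d)) ` (supp s \<times> supp t)"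
      unfolding p by (intro image_eqI[of _ _ "((take i u, take j v), (drop i u, drop j v))"]) auto
  qed
  thus ?thesis using assms unfolding FA2_iff by (meson finite_SigmaI finite_imageI finite_subset)
qed

lemma fa2_mult_ftens:
  "fa2_mult (ftens a b) (ftens c d) = ftens (fa_mult a c) (fa_mult b (d :: 'k::comm_ring_1 fa))"
  by (auto simp: fa2_mult_def ftens_def fa_mult_def sum_product mult_ac intro!: sum.cong)

lemma fa2_mult_add_left:
  "fa2_mult (fa2_add s t) r = fa2_add (fa2_mult s r) (fa2_mult t (r :: 'k::comm_ring_1 fa2))"
  by (auto simp: fa2_mult_def fa2_add_def distrib_right sum.distrib)

lemma fa2_mult_add_right:
  "fa2_mult r (fa2_add s t) = fa2_add (fa2_mult r s) (fa2_mult r (t :: 'k::comm_ring_1 fa2))"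
  by (auto simp: fa2_mult_def fa2_add_def distrib_left sum.distrib)

lemma fa2_mult_zero_right [simp]: "fa2_mult r fa2_zero = (fa2_zero :: 'k::comm_ring_1 fa2)"
  by (auto simp: fa2_mult_def fa2_zero_def)

lemma ftens_add_left: "ftens (fa_add f g) h = fa2_add (ftens f h) (ftens g (h :: 'k::comm_ring_1 fa))"
  by (auto simp: ftens_def fa2_add_def fa_add_def distrib_right)

lemma fa2_induct [consumes 1, case_names zero step]:
  fixes t :: "'k::comm_ring_1 fa2"
  assumes t: "t \<in> FA2" and zero: "P fa2_zero"
    and step: "\<And>h c u v. P h \<Longrightarrow> P (fa2_add h (ftens (fa_smult c (fa_word u)) (fa_word v)))"
  shows "P t"
proof -
  have "P (\<lambda>p. if p \<in> F then t p else 0)" if "finite F" for F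
    using that
  proof (induction rule: finite_induct)
    case empty
    thus ?case using zero by (simp add: fa2_zero_def)
  next
    case (insert p F)
    obtain u v where p: "p = (u, v)" by (cases p)
    have "(\<lambda>x. if x \<in> insert p F then t x else 0) =
          fa2_add (\<lambda>x. if x \<in> F then t x else 0) (ftens (fa_smult (t p) (fa_word u)) (fa_word v))"
      using insert(2) by (auto simp: fa2_add_def ftens_def fa_smult_def fa_word_def p)
    thus ?case using step[OF insert(3)] by simp
  qed
  moreover have "(\<lambda>p. if p \<in> supp t then t p else 0) = t" by auto
  ultimately show ?thesis using t by (metis FA2_iff)
qed

lemma sum_tens_apply: "sum_tens ps x = (\<Sum>p\<leftarrow>ps. ftens (fst p) (snd p) x)"
  by (induction ps) (auto simp: sum_tens_def fa2_add_def fa2_zero_def)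

lemma tens_map_fa_word: "t \<in> FA2 \<Longrightarrow> tens_map fa_word t = (t :: 'k::comm_ring_1 fa2)"
proof
  fix p :: "bool list \<times> bool list"
  assume "t \<in> FA2"
  hence "(\<Sum>uv\<in>supp t. if uv = p then t uv else 0) = t p" by (simp add: FA2_iff)
  moreover have "tens_map fa_word t p = (\<Sum>uv\<in>supp t. if uv = p then t uv else 0)"
    unfolding tens_map_def by (intro sum.cong refl) (auto simp: ftens_def fa_word_def split: prod.split)
  ultimately show "tens_map fa_word t p = t p" by simp
qed

context fa_quotient
begin

lemma tens_ideal_smult: "x \<in> tens_ideal I \<Longrightarrow> fa2_smult c x \<in> tens_ideal I"
proof (induction rule: tens_ideal.induct)
  case zero
  thus ?case using tens_ideal.zero by (simp add: fa2_smult_def fa2_zero_def)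
next
  case (left r g)
  have "fa2_smult c (ftens r g) = ftens (fa_smult c r) g"
    by (auto simp: fa2_smult_def ftens_def fa_smult_def mult.assoc)
  thus ?case using left by (simp add: tens_ideal.left ideal_smult)
next
  case (right r g)
  have "fa2_smult c (ftens g r) = ftens (fa_smult c g) r"
    by (auto simp: fa2_smult_def ftens_def fa_smult_def mult.assoc)
  thus ?case using right by (simp add: tens_ideal.right)
next
  case (add s t)
  have "fa2_smult c (fa2_add s t) = fa2_add (fa2_smult c s) (fa2_smult c t)"
    by (auto simp: fa2_smult_def fa2_add_def distrib_left)
  thus ?case using add by (simp add: tens_ideal.add)
qed

lemma tens_ideal_lincomb:
  "finite S \<Longrightarrow> (\<And>w. w \<in> S \<Longrightarrow> \<phi> w \<in> tens_ideal I) \<Longrightarrow>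
   (\<lambda>b. \<Sum>w\<in>S. c w * \<phi> w b) \<in> tens_ideal I"
proof (induction rule: finite_induct)
  case empty
  thus ?case using tens_ideal.zero by (simp add: fa2_zero_def)
next
  case (insert a F)
  have "(\<lambda>b. \<Sum>w\<in>insert a F. c w * \<phi> w b) =
        fa2_add (fa2_smult (c a) (\<phi> a)) (\<lambda>b. \<Sum>w\<in>F. c w * \<phi> w b)"
    using insert by (simp add: fa2_add_def fa2_smult_def)
  thus ?case using insert by (simp add: tens_ideal.add tens_ideal_smult)
qed

end

section \<open>The comultiplication maps \<open>wH J\<close> into \<open>wH J \<otimes> wH J\<close>\<close>

definition Z_in_both_factors :: "'k::zero fa2 \<Rightarrow> bool" where
  "Z_in_both_factors t \<longleftrightarrow> (\<forall>u v. t (u, v) \<noteq> 0 \<longrightarrow> True \<in> set u \<and> True \<in> set v)"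

lemma Z_in_both_factors_mult_left:
  "Z_in_both_factors s \<Longrightarrow> Z_in_both_factors (fa2_mult s (t :: 'k::comm_ring_1 fa2))"
  unfolding Z_in_both_factors_def by (meson fa2_mult_nonzero_split in_set_takeD)

lemma Z_in_both_factors_mult_right:
  "Z_in_both_factors t \<Longrightarrow> Z_in_both_factors (fa2_mult s (t :: 'k::comm_ring_1 fa2))"
  unfolding Z_in_both_factors_def by (meson fa2_mult_nonzero_split in_set_dropD)

context wH4n
begin

abbreviation comult_word :: "'k \<Rightarrow> bool list \<Rightarrow> 'k fa2" where
  "comult_word a w \<equiv> hom_word fa2_mult fa2_one (comult_gen n q a) w"

lemma comult_eq_lincomb: "comult n q a f = (\<lambda>b. \<Sum>w\<in>supp f. f w * comult_word a w b)"
  by (simp add: comult_def lin_ext_def)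

lemma comult_gen_words:
  "comult_gen n q a True = fa2_add (ftens (fa_word [True]) (fa_word [True]))
      (fa2_smult (a * (1 - inverse (q^2)))
        (ftens (fa_word (replicate (n+1) True @ [False])) (fa_word [True, False])))"
  "comult_gen n q a False = fa2_add (ftens (fa_word [False]) (fa_word []))
      (ftens (fa_word (replicate n True)) (fa_word [False]))"
  unfolding comult_gen_def pow_Zg by (simp_all add: Zg_def Xg_def fa_one_def)

lemma comult_word_FA2 [simp]: "comult_word a w \<in> FA2"
proof -
  have "comult_gen n q a c \<in> FA2" for c
    by (cases c) (simp_all add: comult_gen_words)
  thus ?thesis by (induction w) (simp_all add: hom_word_def)
qed

lemma comult_FA2: "comult n q a f \<in> FA2"
  unfolding comult_eq_lincomb by (rule FA2_lincomb) simp

lemma comult_word_Z_in_both_factors: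
  "True \<in> set w \<Longrightarrow> Z_in_both_factors (comult_word a w)"
proof (induction w)
  case (Cons c w)
  have "Z_in_both_factors (comult_gen n q a True)"
    unfolding Z_in_both_factors_def comult_gen_words fa2_add_def fa2_smult_def ftens_def fa_word_def
    by auto
  thus ?case using Cons
    by (cases c) (simp_all add: hom_word_def Z_in_both_factors_mult_left Z_in_both_factors_mult_right)
qed simp

lemma comult_X_square_in_tens_ideal:
  "t \<in> FA2 \<Longrightarrow> fa2_mult (comult_gen n q a False) (fa2_mult (comult_gen n q a False) t) \<in> tens_ideal I"
proof (induction rule: fa2_induct)
  case (step h c u v)
  let ?X = "fa_word [False] :: 'k fa" and ?Zn = "fa_word (replicate n True) :: 'k fa"
  let ?a = "fa_smult c (fa_word u)" and ?b = "fa_word v :: 'k fa"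
  have XXa: "fa_mult ?X (fa_mult ?X ?a) \<in> I"
    using ideal_smult[OF word_XX_in_ideal[of "[]" u], of c] by (simp add: fa_mult_distribs)
  have XXb: "fa_mult ?X (fa_mult ?X ?b) \<in> I"
    using word_XX_in_ideal[of "[]" v] by (simp add: fa_mult_distribs)
  have "fa_word (replicate n True @ [False] @ u) \<approx>
        fa_smult (-1) (fa_word (False # replicate n True @ u))"
    using eq_mod_word_context[OF Z_pow_X_commute[of n], of "[]" u] by (simp add: q_pow_n)
  from eq_mod_smult[OF this, of c]
  have "fa_diff (fa_mult ?Zn (fa_mult ?X ?a)) (fa_smult (-1) (fa_mult ?X (fa_mult ?Zn ?a))) \<in> I"
    by (simp add: fa_mult_distribs eq_mod_def)
  hence ZnX_XZn: "fa_add (fa_mult ?Zn (fa_mult ?X ?a)) (fa_mult ?X (fa_mult ?Zn ?a)) \<in> I"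
    by (simp add: fa_diff_def fa_add_def fa_smult_def)
  have "fa2_mult (comult_gen n q a False) (fa2_mult (comult_gen n q a False) (ftens ?a ?b)) =
    fa2_add (fa2_add (ftens (fa_mult ?X (fa_mult ?X ?a)) ?b)
                     (ftens (fa_add (fa_mult ?Zn (fa_mult ?X ?a)) (fa_mult ?X (fa_mult ?Zn ?a)))
                            (fa_mult ?X ?b)))
            (ftens (fa_mult ?Zn (fa_mult ?Zn ?a)) (fa_mult ?X (fa_mult ?X ?b)))"
    unfolding comult_gen_words fa2_mult_add_left fa2_mult_add_right fa2_mult_ftens ftens_add_left
    by (auto simp: fa2_add_def fa_one_def[symmetric])
  hence "fa2_mult (comult_gen n q a False) (fa2_mult (comult_gen n q a False) (ftens ?a ?b))
         \<in> tens_ideal I"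
    using XXa XXb ZnX_XZn by (simp add: tens_ideal.add tens_ideal.left tens_ideal.right)
  thus ?case using step by (simp add: fa2_mult_add_right tens_ideal.add)
qed (simp add: tens_ideal.zero)

lemma sum_tens_w1_if_Z_in_both_factors:
  assumes "t \<in> FA2" "Z_in_both_factors t"
  shows "\<exists>ps. set ps \<subseteq> w1 \<times> w1 \<and> sum_tens ps = t"
proof -
  obtain L where L: "set L = supp t" "distinct L"
    using finite_distinct_list assms(1) by (auto simp: FA2_iff)
  define ps where "ps = map (\<lambda>p. (fa_smult (t p) (fa_word (fst p)), fa_word (snd p) :: 'k fa)) L"
  have "sum_tens ps x = t x" for x
  proof -
    have "sum_tens ps x = (\<Sum>p\<in>supp t. ftens (fa_smult (t p) (fa_word (fst p))) (fa_word (snd p)) x)"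
      unfolding sum_tens_apply ps_def using L by (simp add: comp_def sum_list_distinct_conv_sum_set)
    also have "\<dots> = (\<Sum>p\<in>supp t. if p = x then t p else 0)"
      by (intro sum.cong refl) (auto simp: ftens_def fa_smult_def fa_word_def split: prod.split)
    also have "\<dots> = t x" using assms(1) by (simp add: FA2_iff)
    finally show ?thesis .
  qed
  moreover have "set ps \<subseteq> w1 \<times> w1"
  proof
    fix z assume "z \<in> set ps"
    then obtain u v where "t (u, v) \<noteq> 0" "z = (fa_smult (t (u, v)) (fa_word u), fa_word v)"
      using L unfolding ps_def by auto
    thus "z \<in> w1 \<times> w1"
      using assms(2) smult_word_in_w1[of v 1] smult_word_in_w1[of u] by (auto simp: Z_in_both_factors_def)
  qed
  ultimately show ?thesis by blast
qed

lemma comult_w1: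
  assumes "f \<in> w1"
  shows "\<exists>ps. set ps \<subseteq> w1 \<times> w1 \<and> fa2_diff (comult n q a f) (sum_tens ps) \<in> tens_ideal I"
proof -
  have f: "f \<in> FA" using assms by (simp add: w_part_iff)
  hence fin: "finite (supp f)" by (simp add: FA_iff)
  define S\<^sub>Z where "S\<^sub>Z = {w\<in>supp f. True \<in> set w}"
  define S\<^sub>X where "S\<^sub>X = {w\<in>supp f. True \<notin> set w}"
  define G where "G = (\<lambda>b. \<Sum>w\<in>S\<^sub>Z. f w * comult_word a w b)"
  define R where "R = (\<lambda>b. \<Sum>w\<in>S\<^sub>X. f w * comult_word a w b)"
  have "comult n q a f b = G b + R b" for b
    unfolding comult_eq_lincomb G_def R_def S\<^sub>Z_def S\<^sub>X_def using fin
    by (subst sum.union_disjoint[symmetric]) (auto intro: sum.cong)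
  hence diff: "fa2_diff (comult n q a f) G = R"
    by (simp add: fa2_diff_def)
  have "R \<in> tens_ideal I"
    unfolding R_def
  proof (rule tens_ideal_lincomb)
    fix w assume "w \<in> S\<^sub>X"
    moreover have "f [] = 0" "f [False] = 0" using w1_coeffs_zero[OF assms] by auto
    ultimately obtain w' where "w = False # False # w'"
      unfolding S\<^sub>X_def by (cases w rule: remdups_adj.cases) auto
    thus "comult_word a w \<in> tens_ideal I"
      using comult_X_square_in_tens_ideal[OF comult_word_FA2[of a w'], of a] by (simp add: hom_word_def)
  qed (simp add: S\<^sub>X_def fin)
  moreover have "G \<in> FA2" unfolding G_def by (rule FA2_lincomb) simp
  moreover have "Z_in_both_factors G"
    unfolding Z_in_both_factors_def
  proof (intro allI impI)
    fix u v assume "G (u, v) \<noteq> 0"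
    then obtain w where "w \<in> S\<^sub>Z" "comult_word a w (u, v) \<noteq> 0"
      unfolding G_def by (auto elim: sum.not_neutral_contains_not_neutral)
    thus "True \<in> set u \<and> True \<in> set v"
      using comult_word_Z_in_both_factors[of w a] unfolding S\<^sub>Z_def Z_in_both_factors_def by blast
  qed
  ultimately show ?thesis using diff sum_tens_w1_if_Z_in_both_factors by metis
qed

lemma w1_Hopf_iso_H:
  "\<exists>\<psi> :: bool list \<Rightarrow> 'k fa. (\<forall>w. \<psi> w \<in> FA) \<and>
     (\<forall>f\<in>I. lin_ext \<psi> f \<in> H.I) \<and>
     (\<forall>f\<in>w1. \<forall>g\<in>w1.
        fa_diff (lin_ext \<psi> (fa_mult f g)) (fa_mult (lin_ext \<psi> f) (lin_ext \<psi> g)) \<in> H.I) \<and>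
     fa_diff (lin_ext \<psi> J) fa_one \<in> H.I \<and>
     (\<forall>f\<in>w1. lin_ext \<psi> f \<in> H.I \<longrightarrow> f \<in> I) \<and>
     (\<forall>h\<in>FA. \<exists>f\<in>w1. fa_diff (lin_ext \<psi> f) h \<in> H.I) \<and>
     (\<forall>f\<in>w1. fa2_diff (tens_map \<psi> (comult n q a f)) (comult n q a (lin_ext \<psi> f))
        \<in> tens_ideal H.I) \<and>
     (\<forall>f\<in>w1. counit (lin_ext \<psi> f) = counit f) \<and>
     (\<forall>f\<in>w1. fa_diff (lin_ext \<psi> (antipode_w1 n f)) (antipode_H n (lin_ext \<psi> f)) \<in> H.I)"
proof (intro exI[of _ fa_word] conjI ballI allI impI)
  fix f assume "f \<in> w1"
  hence f: "f \<in> FA" by (rule w_part_FA)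
  have "fa2_diff (comult n q a f) (comult n q a f) = fa2_zero"
    by (simp add: fa2_diff_def fa2_zero_def)
  thus "fa2_diff (tens_map fa_word (comult n q a f)) (comult n q a (lin_ext fa_word f))
        \<in> tens_ideal H.I"
    using f by (simp add: lin_ext_fa_word tens_map_fa_word comult_FA2 tens_ideal.zero)
  show "fa_diff (lin_ext fa_word (antipode_w1 n f)) (antipode_H n (lin_ext fa_word f)) \<in> H.I"
    using antipode_w1_eq_mod_antipode_H[OF f]
    by (simp add: f antipode_w1_FA lin_ext_fa_word H.eq_mod_def)
next
  fix h :: "'k fa" assume "h \<in> FA"
  thus "\<exists>f\<in>w1. fa_diff (lin_ext fa_word f) h \<in> H.I"
    using w1_onto_H by (intro bexI[of _ "fa_mult h J"]) (simp_all add: lin_ext_fa_word H.eq_mod_def)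
qed (use ideal_subset_ideal_H ideal_FA J_eq_one_mod_H w1_inter_ideal_H in
      \<open>auto simp: lin_ext_fa_word w_part_FA fa_ideal.zero H.eq_mod_def\<close>)

end

lemma primitive_root_pow_half:
  fixes q :: "'k::idom"
  assumes "primitive_root q (2*n)" "n \<ge> 1"
  shows "q ^ n = -1"
proof -
  have "(q ^ n)\<^sup>2 = 1" "q ^ n \<noteq> 1"
    using assms by (simp_all add: primitive_root_def power_mult[symmetric] mult.commute)
  thus ?thesis by (simp add: power2_eq_1_iff)
qed

theorem proposition3p2:
  fixes n :: nat and q a :: "'k::field_char_0"
  assumes "alg_closed TYPE('k)"
    and "n \<ge> 1"
    and "primitive_root q (2*n)"
    and "a \<noteq> 0"
  defines "I \<equiv> fa_ideal (wH_rels n q)"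
    and "IH \<equiv> fa_ideal (H_rels n q)"
    and "J \<equiv> Jg n"
    and "w1 \<equiv> w_part (fa_ideal (wH_rels n q)) (Jg n)"
    and "w2 \<equiv> w_part (fa_ideal (wH_rels n q)) (fa_diff fa_one (Jg n))"
  shows
    \<comment> \<open>w1 and w2 are two-sided ideals of wH_{4n}\<close>
    "(fa_zero \<in> w1 \<and> (\<forall>f\<in>w1. \<forall>g\<in>w1. fa_add f g \<in> w1)
       \<and> (\<forall>f\<in>w1. \<forall>g\<in>FA. fa_mult g f \<in> w1 \<and> fa_mult f g \<in> w1))
     \<and> (fa_zero \<in> w2 \<and> (\<forall>f\<in>w2. \<forall>g\<in>w2. fa_add f g \<in> w2)
       \<and> (\<forall>f\<in>w2. \<forall>g\<in>FA. fa_mult g f \<in> w2 \<and> fa_mult f g \<in> w2))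
    \<comment> \<open>wH_{4n} = w1 \<oplus> w2\<close>
     \<and> (\<forall>f\<in>FA. \<exists>g\<in>w1. \<exists>h\<in>w2. fa_diff f (fa_add g h) \<in> I)
     \<and> (\<forall>f. f \<in> w1 \<and> f \<in> w2 \<longrightarrow> f \<in> I)
    \<comment> \<open>the restricted comultiplication maps w1 into w1 \<otimes> w1\<close>
     \<and> (\<forall>f\<in>w1. \<exists>ps. set ps \<subseteq> w1 \<times> w1 \<and>
            fa2_diff (comult n q a f) (sum_tens ps) \<in> tens_ideal I)
    \<comment> \<open>w1 \<cong> H_{4n} as Hopf algebras\<close>
     \<and> (\<exists>\<psi> :: bool list \<Rightarrow> 'k fa. (\<forall>w. \<psi> w \<in> FA) \<and>
          (\<forall>f\<in>I. lin_ext \<psi> f \<in> IH) \<and>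
          (\<forall>f\<in>w1. \<forall>g\<in>w1. fa_diff (lin_ext \<psi> (fa_mult f g))
                               (fa_mult (lin_ext \<psi> f) (lin_ext \<psi> g)) \<in> IH) \<and>
          fa_diff (lin_ext \<psi> J) fa_one \<in> IH \<and>
          (\<forall>f\<in>w1. lin_ext \<psi> f \<in> IH \<longrightarrow> f \<in> I) \<and>
          (\<forall>h\<in>FA. \<exists>f\<in>w1. fa_diff (lin_ext \<psi> f) h \<in> IH) \<and>
          (\<forall>f\<in>w1. fa2_diff (tens_map \<psi> (comult n q a f))
                             (comult n q a (lin_ext \<psi> f)) \<in> tens_ideal IH) \<and>
          (\<forall>f\<in>w1. counit (lin_ext \<psi> f) = counit f) \<and>
          (\<forall>f\<in>w1. fa_diff (lin_ext \<psi> (antipode_w1 n f))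
                           (antipode_H n (lin_ext \<psi> f)) \<in> IH))
    \<comment> \<open>w2 \<cong> k[y]/(y^2) as algebras\<close>
     \<and> (\<exists>\<chi> :: bool list \<Rightarrow> 'k poly.
          (\<forall>f\<in>I. [:0, 0, 1:] dvd lin_ext_poly \<chi> f) \<and>
          (\<forall>f\<in>w2. \<forall>g\<in>w2. [:0, 0, 1:] dvd
               (lin_ext_poly \<chi> (fa_mult f g) - lin_ext_poly \<chi> f * lin_ext_poly \<chi> g)) \<and>
          [:0, 0, 1:] dvd (lin_ext_poly \<chi> (fa_diff fa_one J) - 1) \<and>
          (\<forall>f\<in>w2. [:0, 0, 1:] dvd lin_ext_poly \<chi> f \<longrightarrow> f \<in> I) \<and>
          (\<forall>p. \<exists>f\<in>w2. [:0, 0, 1:] dvd (lin_ext_poly \<chi> f - p)))"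
proof -
  interpret wH4n n q
    using assms(2,3) primitive_root_pow_half by unfold_locales
  have "fa_two_sided_ideal w1" "fa_two_sided_ideal w2"
    by (simp_all add: w1_def w2_def w_part_two_sided_ideal J_central central_complement)
  moreover have "\<exists>g\<in>w1. \<exists>h\<in>w2. fa_diff f (fa_add g h) \<in> I" if "f \<in> FA" for f
    unfolding I_def w1_def w2_def using w_part_complement_decomposition[OF that J_FA] .
  moreover have "f \<in> I" if "f \<in> w1" "f \<in> w2" for f
    using that w_part_complement_inter[OF _ _ J_FA J_idem] by (simp add: I_def w1_def w2_def)
  ultimately show ?thesis
    using comult_w1 w1_Hopf_iso_H w2_iso_dual_numbers
    by (simp add: fa_two_sided_ideal_def I_def IH_def J_def w1_def w2_def)
qed

end
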